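(* Let $n\ge 2$ and let $P$ be a partial $n$-Metric on a set $X$. Then for all $(x_1,\dots,x_n)\in X^n$, $(y_1,\dots,y_n)\in X^n$ and every $t\in\{1,\dots,n\}$, $$P(x_1,\dots,x_n)\le P(y_1,\dots,y_t,x_{t+1},\dots,x_n)+\sum_{j=1}^t\big[P(\langle y_j\rangle^{n-1},x_j)-P(\langle y_j\rangle^n)\big].$$
   Context: Notation: $\langle a\rangle^k$ denotes the $k$-tuple $(a,a,\dots,a)$, inserted into the argument list of a function. A partial $n$-Metric on $X$ is a function $P:X^n\to\mathbb{R}$ such that for all $x_1,\dots,x_n,a\in X$: (1) $P(\langle x_1\rangle^n)\le P(\langle x_1\rangle^{n-1},x_2)$; (2) $P(x_1,\dots,x_n)=P(x_{\pi(1)},\dots,x_{\pi(n)})$ for every permutation $\pi$ of $\{1,\dots,n\}$; (3) $P(\langle x_1\rangle^{n-1},x_2)=P(\langle x_1\rangle^n)$ and $P(\langle x_2\rangle^{n-1},x_1)=P(\langle x_2\rangle^n)$ if and only if $x_1=x_2$; (4) $P(x_1,\dots,x_n)\le P(x_1,\dots,x_{n-1},a)+P(\langle a\rangle^{n-1},x_n)-P(\langle a\rangle^n)$. *)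

theory Defs
  imports "HOL-Analysis.Analysis"
begin

text \<open>Points of X^n are represented as lists of length n with entries in X.
  The tuple notation \<langle>a\<rangle>^k is replicate k a.\<close>

definition partial_n_metric :: "'a set \<Rightarrow> nat \<Rightarrow> ('a list \<Rightarrow> real) \<Rightarrow> bool" where
  "partial_n_metric X n P \<longleftrightarrow>
     (\<forall>x1\<in>X. \<forall>x2\<in>X. P (replicate n x1) \<le> P (replicate (n - 1) x1 @ [x2])) \<and>
     (\<forall>xs ys. set xs \<subseteq> X \<longrightarrow> length xs = n \<longrightarrow> mset ys = mset xs \<longrightarrow> P xs = P ys) \<and>
     (\<forall>x1\<in>X. \<forall>x2\<in>X.
        (P (replicate (n - 1) x1 @ [x2]) = P (replicate n x1) \<and>
         P (replicate (n - 1) x2 @ [x1]) = P (replicate n x2)) \<longleftrightarrow> x1 = x2) \<and>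
     (\<forall>xs a. set xs \<subseteq> X \<longrightarrow> length xs = n \<longrightarrow> a \<in> X \<longrightarrow>
        P xs \<le> P (butlast xs @ [a]) + P (replicate (n - 1) a @ [last xs]) - P (replicate n a))"

end

theory Submission
  imports Defs
begin

text \<open>Only symmetry and the triangle axiom (4) are needed. Axiom (4) replaces the last entry
  of a tuple by a, at the cost P(\<langle>a\<rangle>^(n-1), x) - P(\<langle>a\<rangle>^n); by symmetry any entry can be
  replaced this way, and replacing x_1, ..., x_t by y_1, ..., y_t one at a time and adding up
  the costs gives the inequality.\<close>

lemma partial_n_metric_mset_eq:
  assumes "partial_n_metric X n P" "set xs \<subseteq> X" "length xs = n" "mset ys = mset xs"
  shows "P xs = P ys"
  using assms unfolding partial_n_metric_def by blast

lemma partial_n_metric_triangle: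
  assumes "partial_n_metric X n P" "set xs \<subseteq> X" "length xs = n" "a \<in> X"
  shows "P xs \<le> P (butlast xs @ [a]) + P (replicate (n - 1) a @ [last xs]) - P (replicate n a)"
  using assms unfolding partial_n_metric_def by blast

lemma partial_n_metric_replace_entry:
  assumes pm: "partial_n_metric X n P"
    and X: "set us \<subseteq> X" "set vs \<subseteq> X" "x \<in> X" "y \<in> X"
    and len: "Suc (length us + length vs) = n"
  shows "P (us @ x # vs) \<le> P (us @ y # vs) + P (replicate (n - 1) y @ [x]) - P (replicate n y)"
proof -
  have "P (us @ x # vs) = P (us @ vs @ [x])"
    by (rule partial_n_metric_mset_eq[OF pm]) (use X len in auto)
  also have "\<dots> \<le> P (us @ vs @ [y]) + P (replicate (n - 1) y @ [x]) - P (replicate n y)"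
    using partial_n_metric_triangle[OF pm, of "us @ vs @ [x]" y] X len
    by (simp add: butlast_append)
  also have "P (us @ vs @ [y]) = P (us @ y # vs)"
    by (rule partial_n_metric_mset_eq[OF pm]) (use X len in auto)
  finally show ?thesis .
qed

lemma partial_n_metric_replace_prefix:
  assumes pm: "partial_n_metric X n P"
    and xs: "set xs \<subseteq> X" "length xs = n"
    and ys: "set ys \<subseteq> X" "length ys = n"
    and "k \<le> n"
  shows "P xs \<le> P (take k ys @ drop k xs)
           + (\<Sum>j<k. P (replicate (n - 1) (ys ! j) @ [xs ! j]) - P (replicate n (ys ! j)))"
  using \<open>k \<le> n\<close>
proof (induction k)
  case 0
  then show ?case by simp
next
  case (Suc k)
  then have k: "k < n" by simp
  have "take k ys @ drop k xs = take k ys @ xs ! k # drop (Suc k) xs"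
    using k xs by (simp add: Cons_nth_drop_Suc)
  moreover have "take (Suc k) ys @ drop (Suc k) xs = take k ys @ ys ! k # drop (Suc k) xs"
    using k ys by (simp add: take_Suc_conv_app_nth)
  moreover have "P (take k ys @ xs ! k # drop (Suc k) xs)
      \<le> P (take k ys @ ys ! k # drop (Suc k) xs)
        + P (replicate (n - 1) (ys ! k) @ [xs ! k]) - P (replicate n (ys ! k))"
  proof (rule partial_n_metric_replace_entry[OF pm])
    show "set (take k ys) \<subseteq> X" using ys by (meson order_trans set_take_subset)
    show "set (drop (Suc k) xs) \<subseteq> X" using xs by (meson order_trans set_drop_subset)
  qed (use k xs ys in auto)
  ultimately show ?case
    using Suc by simp
qed

theorem theorem2p9:
  fixes X :: "'a set" and n :: nat and P :: "'a list \<Rightarrow> real"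
    and xs ys :: "'a list" and t :: nat
  assumes "n \<ge> 2"
    and "partial_n_metric X n P"
    and "set xs \<subseteq> X" and "length xs = n"
    and "set ys \<subseteq> X" and "length ys = n"
    and "1 \<le> t" and "t \<le> n"
  shows "P xs \<le> P (take t ys @ drop t xs)
           + (\<Sum>j<t. P (replicate (n - 1) (ys ! j) @ [xs ! j]) - P (replicate n (ys ! j)))"
  using partial_n_metric_replace_prefix[OF assms(2-6) assms(8)] .

end
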